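(* If a second-order ODE $x_2=F(t,x,x_1)$ is invariant under a telescopic vector field $\tau^{(2)}=\alpha\partial_t+\beta\partial_x+\gamma^{(1)}\partial_{x_1}+\gamma^{(2)}\partial_{x_2}$, then $\mathbf{X}=\partial_x$ is a $\lambda$-symmetry of the equation for the function $\lambda=\lambda(t,x,x_1)$ given by $$\lambda=\frac{\gamma^{(1)}-\alpha F}{\beta-\alpha x_1}.$$
   Context: Jet coordinates $(t,x,x_1,x_2)$, $x_i=d^ix/dt^i$; $D_t$ the total derivative. A telescopic vector field of order 2 is $\tau^{(2)}=\alpha\partial_t+\beta\partial_x+\gamma^{(1)}\partial_{x_1}+\gamma^{(2)}\partial_{x_2}$ with $\alpha,\beta,\gamma^{(1)}$ smooth functions of $(t,x,x_1)$, $\beta-\alpha x_1\neq0$, and $\gamma^{(2)}=D_t(\gamma^{(1)})-D_t(\alpha)x_2+\frac{\gamma^{(1)}+x_1D_t\alpha-D_t\beta}{\beta-x_1\alpha}(\gamma^{(1)}-\alpha x_2)$; invariance means $\tau^{(2)}$ is tangent to $\{x_2=F\}$. For $\lambda=\lambda(t,x,x_1)$ and $\mathbf{X}=\rho(t,x)\partial_t+\phi^0(t,x)\partial_x$, $\mathbf{X}^{[\lambda,(2)]}=\rho\partial_t+\phi^0\partial_x+\phi^{[\lambda,(1)]}\partial_{x_1}+\phi^{[\lambda,(2)]}\partial_{x_2}$ with $\phi^{[\lambda,(0)]}=\phi^0$, $\phi^{[\lambda,(i)]}=D_t(\phi^{[\lambda,(i-1)]})-D_t(\rho)x_i+\lambda(\phi^{[\lambda,(i-1)]}-\rho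 x_i)$; $\mathbf{X}$ is a $\lambda$-symmetry of $x_2=F$ if $\mathbf{X}^{[\lambda,(2)]}$ is tangent to $\{x_2=F\}$. *)

theory Defs
  imports "HOL-Analysis.Analysis"
begin

text \<open>Smoothness (C-infinity on R^3): continuous, with all first
  partial derivatives existing everywhere and again smooth (coinductively, hence all
  iterated partial derivatives exist and are continuous).\<close>

coinductive smooth3 :: "(real \<Rightarrow> real \<Rightarrow> real \<Rightarrow> real) \<Rightarrow> bool" where
  "continuous_on UNIV (\<lambda>(t, x, y). f t x y) \<Longrightarrow>
   (\<And>t x y. ((\<lambda>s. f s x y) has_real_derivative ft t x y) (at t)) \<Longrightarrow>
   (\<And>t x y. ((\<lambda>s. f t s y) has_real_derivative fx t x y) (at x)) \<Longrightarrow>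
   (\<And>t x y. ((\<lambda>s. f t x s) has_real_derivative fy t x y) (at y)) \<Longrightarrow>
   smooth3 ft \<Longrightarrow> smooth3 fx \<Longrightarrow> smooth3 fy \<Longrightarrow> smooth3 f"

definition pt :: "(real \<Rightarrow> real \<Rightarrow> real \<Rightarrow> real) \<Rightarrow> real \<Rightarrow> real \<Rightarrow> real \<Rightarrow> real" where
  "pt f t x x1 = deriv (\<lambda>s. f s x x1) t"
definition px :: "(real \<Rightarrow> real \<Rightarrow> real \<Rightarrow> real) \<Rightarrow> real \<Rightarrow> real \<Rightarrow> real \<Rightarrow> real" where
  "px f t x x1 = deriv (\<lambda>s. f t s x1) x"
definition px1 :: "(real \<Rightarrow> real \<Rightarrow> real \<Rightarrow> real) \<Rightarrow> real \<Rightarrow> real \<Rightarrow> real \<Rightarrow> real" where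
  "px1 f t x x1 = deriv (\<lambda>s. f t x s) x1"

definition Dt :: "(real \<Rightarrow> real \<Rightarrow> real \<Rightarrow> real) \<Rightarrow> real \<Rightarrow> real \<Rightarrow> real \<Rightarrow> real \<Rightarrow> real" where
  "Dt f t x x1 x2 = pt f t x x1 + x1 * px f t x x1 + x2 * px1 f t x x1"

definition Dt0 :: "(real \<Rightarrow> real \<Rightarrow> real) \<Rightarrow> real \<Rightarrow> real \<Rightarrow> real \<Rightarrow> real" where
  "Dt0 g t x x1 = deriv (\<lambda>s. g s x) t + x1 * deriv (\<lambda>s. g t s) x"

definition gamma2 :: "(real \<Rightarrow> real \<Rightarrow> real \<Rightarrow> real) \<Rightarrow> (real \<Rightarrow> real \<Rightarrow> real \<Rightarrow> real) \<Rightarrow>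
    (real \<Rightarrow> real \<Rightarrow> real \<Rightarrow> real) \<Rightarrow> real \<Rightarrow> real \<Rightarrow> real \<Rightarrow> real \<Rightarrow> real" where
  "gamma2 \<alpha> \<beta> \<gamma>1 t x x1 x2 =
     Dt \<gamma>1 t x x1 x2 - Dt \<alpha> t x x1 x2 * x2
     + (\<gamma>1 t x x1 + x1 * Dt \<alpha> t x x1 x2 - Dt \<beta> t x x1 x2) / (\<beta> t x x1 - x1 * \<alpha> t x x1)
       * (\<gamma>1 t x x1 - \<alpha> t x x1 * x2)"

text \<open>The telescopic vector field alpha d_t + beta d_x + gamma1 d_x1 + gamma2 d_x2 is tangent
  to the surface {x2 = F(t,x,x1)}, i.e. it annihilates x2 - F on that surface.\<close>
definition telescopic_invariant :: "(real \<Rightarrow> real \<Rightarrow> real \<Rightarrow> real) \<Rightarrow> (real \<Rightarrow> real \<Rightarrow> real \<Rightarrow> real) \<Rightarrow>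
    (real \<Rightarrow> real \<Rightarrow> real \<Rightarrow> real) \<Rightarrow> (real \<Rightarrow> real \<Rightarrow> real \<Rightarrow> real) \<Rightarrow> bool" where
  "telescopic_invariant \<alpha> \<beta> \<gamma>1 F \<longleftrightarrow>
     (\<forall>t x x1. gamma2 \<alpha> \<beta> \<gamma>1 t x x1 (F t x x1)
        = \<alpha> t x x1 * pt F t x x1 + \<beta> t x x1 * px F t x x1 + \<gamma>1 t x x1 * px1 F t x x1)"

definition lphi1 :: "(real \<Rightarrow> real \<Rightarrow> real) \<Rightarrow> (real \<Rightarrow> real \<Rightarrow> real) \<Rightarrow>
    (real \<Rightarrow> real \<Rightarrow> real \<Rightarrow> real) \<Rightarrow> real \<Rightarrow> real \<Rightarrow> real \<Rightarrow> real" where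
  "lphi1 \<rho> \<phi>0 lam t x x1 =
     Dt0 \<phi>0 t x x1 - Dt0 \<rho> t x x1 * x1 + lam t x x1 * (\<phi>0 t x - \<rho> t x * x1)"

definition lphi2 :: "(real \<Rightarrow> real \<Rightarrow> real) \<Rightarrow> (real \<Rightarrow> real \<Rightarrow> real) \<Rightarrow>
    (real \<Rightarrow> real \<Rightarrow> real \<Rightarrow> real) \<Rightarrow> real \<Rightarrow> real \<Rightarrow> real \<Rightarrow> real \<Rightarrow> real" where
  "lphi2 \<rho> \<phi>0 lam t x x1 x2 =
     Dt (lphi1 \<rho> \<phi>0 lam) t x x1 x2 - Dt0 \<rho> t x x1 * x2
     + lam t x x1 * (lphi1 \<rho> \<phi>0 lam t x x1 - \<rho> t x * x2)"

text \<open>X is a lambda-symmetry of x2 = F: its second lambda-prolongation is tangent to {x2 = F}.\<close>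
definition lambda_symmetry :: "(real \<Rightarrow> real \<Rightarrow> real) \<Rightarrow> (real \<Rightarrow> real \<Rightarrow> real) \<Rightarrow>
    (real \<Rightarrow> real \<Rightarrow> real \<Rightarrow> real) \<Rightarrow> (real \<Rightarrow> real \<Rightarrow> real \<Rightarrow> real) \<Rightarrow> bool" where
  "lambda_symmetry \<rho> \<phi>0 lam F \<longleftrightarrow>
     (\<forall>t x x1. lphi2 \<rho> \<phi>0 lam t x x1 (F t x x1)
        = \<rho> t x * pt F t x x1 + \<phi>0 t x * px F t x x1 + lphi1 \<rho> \<phi>0 lam t x x1 * px1 F t x x1)"

end

theory Submission
  imports Defs
begin

text \<open>Write \<open>\<lambda> = N / d\<close> with \<open>N = \<gamma>1 - \<alpha> F\<close> and \<open>d = \<beta> - \<alpha> x1\<close>. For \<open>X = \<partial>\<^sub>x\<close> the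
  \<open>\<lambda>\<close>-prolongation has coefficients \<open>\<lambda>\<close> and \<open>D\<^sub>t \<lambda> + \<lambda>\<^sup>2\<close>, so the claim is the Riccati-type
  identity \<open>D\<^sub>t \<lambda> + \<lambda>\<^sup>2 = F\<^sub>x + \<lambda> F\<^sub>x\<^sub>1\<close> on \<open>x2 = F\<close>. There \<open>D\<^sub>t d = D\<^sub>t \<beta> - x1 D\<^sub>t \<alpha> - \<alpha> F\<close>, so the
  factor \<open>\<gamma>1 + x1 D\<^sub>t \<alpha> - D\<^sub>t \<beta>\<close> in \<open>\<gamma>2\<close> is \<open>N - D\<^sub>t d\<close>, and invariance reads
  \<open>D\<^sub>t N - \<lambda> D\<^sub>t d + \<lambda> N = d F\<^sub>x + N F\<^sub>x\<^sub>1\<close>. Dividing by \<open>d\<close> and using the quotient rule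
  \<open>D\<^sub>t \<lambda> = (D\<^sub>t N - \<lambda> D\<^sub>t d) / d\<close> gives the identity.\<close>

definition partially_differentiable3 :: "(real \<Rightarrow> real \<Rightarrow> real \<Rightarrow> real) \<Rightarrow> real \<Rightarrow> real \<Rightarrow> real \<Rightarrow> bool" where
  "partially_differentiable3 f t x x1 \<longleftrightarrow>
     (\<lambda>s. f s x x1) field_differentiable at t \<and>
     (\<lambda>s. f t s x1) field_differentiable at x \<and>
     (\<lambda>s. f t x s) field_differentiable at x1"

lemma smooth3_partially_differentiable3:
  assumes "smooth3 f"
  shows "partially_differentiable3 f t x x1"
  using assms
proof cases
  case 1
  then show ?thesis
    unfolding partially_differentiable3_def field_differentiable_def by blast
qed

lemma partially_differentiable3_diff:
  assumes "partially_differentiable3 f t x x1" and "partially_differentiable3 g t x x1"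
  shows "partially_differentiable3 (\<lambda>t x x1. f t x x1 - g t x x1) t x x1"
  using assms unfolding partially_differentiable3_def by (auto intro: field_differentiable_diff)

lemma partially_differentiable3_mult:
  assumes "partially_differentiable3 f t x x1" and "partially_differentiable3 g t x x1"
  shows "partially_differentiable3 (\<lambda>t x x1. f t x x1 * g t x x1) t x x1"
  using assms unfolding partially_differentiable3_def by (auto intro: field_differentiable_mult)

lemma partially_differentiable3_x1: "partially_differentiable3 (\<lambda>t x x1. x1) t x x1"
  unfolding partially_differentiable3_def by (simp add: field_differentiable_ident)

lemma Dt_diff:
  assumes "partially_differentiable3 f t x x1" and "partially_differentiable3 g t x x1"
  shows "Dt (\<lambda>t x x1. f t x x1 - g t x x1) t x x1 x2 = Dt f t x x1 x2 - Dt g t x x1 x2"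
  using assms
  by (simp add: partially_differentiable3_def Dt_def pt_def px_def px1_def algebra_simps)

lemma Dt_mult:
  assumes "partially_differentiable3 f t x x1" and "partially_differentiable3 g t x x1"
  shows "Dt (\<lambda>t x x1. f t x x1 * g t x x1) t x x1 x2
    = Dt f t x x1 x2 * g t x x1 + f t x x1 * Dt g t x x1 x2"
  using assms
  by (simp add: partially_differentiable3_def Dt_def pt_def px_def px1_def algebra_simps)

lemma Dt_divide:
  assumes "partially_differentiable3 f t x x1" and "partially_differentiable3 g t x x1"
    and "g t x x1 \<noteq> 0"
  shows "Dt (\<lambda>t x x1. f t x x1 / g t x x1) t x x1 x2
    = (Dt f t x x1 x2 - f t x x1 / g t x x1 * Dt g t x x1 x2) / g t x x1"
  using assms
  by (simp add: partially_differentiable3_def Dt_def pt_def px_def px1_def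
      field_simps power2_eq_square)

lemma Dt_x1: "Dt (\<lambda>t x x1. x1) t x x1 x2 = x2"
  by (simp add: Dt_def pt_def px_def px1_def)

lemma lambda_symmetry_partial_x_iff:
  "lambda_symmetry (\<lambda>t x. 0) (\<lambda>t x. 1) lam F \<longleftrightarrow>
     (\<forall>t x x1. Dt lam t x x1 (F t x x1) + (lam t x x1)\<^sup>2
        = px F t x x1 + lam t x x1 * px1 F t x x1)"
proof -
  have "lphi1 (\<lambda>t x. 0) (\<lambda>t x. 1) lam = lam"
    by (intro ext) (simp add: lphi1_def Dt0_def)
  then show ?thesis
    by (simp add: lambda_symmetry_def lphi2_def Dt0_def power2_eq_square)
qed

lemma telescopic_invariant_imp_riccati:
  fixes \<alpha> \<beta> \<gamma>1 F :: "real \<Rightarrow> real \<Rightarrow> real \<Rightarrow> real"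
  defines "N \<equiv> \<lambda>t x x1. \<gamma>1 t x x1 - \<alpha> t x x1 * F t x x1"
    and "d \<equiv> \<lambda>t x x1. \<beta> t x x1 - \<alpha> t x x1 * x1"
  assumes \<alpha>: "partially_differentiable3 \<alpha> t x x1" and \<beta>: "partially_differentiable3 \<beta> t x x1"
    and \<gamma>1: "partially_differentiable3 \<gamma>1 t x x1" and F: "partially_differentiable3 F t x x1"
    and d_nonzero: "d t x x1 \<noteq> 0"
    and invariant: "gamma2 \<alpha> \<beta> \<gamma>1 t x x1 (F t x x1)
        = \<alpha> t x x1 * pt F t x x1 + \<beta> t x x1 * px F t x x1 + \<gamma>1 t x x1 * px1 F t x x1"
  shows "Dt (\<lambda>t x x1. N t x x1 / d t x x1) t x x1 (F t x x1) + (N t x x1 / d t x x1)\<^sup>2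
    = px F t x x1 + N t x x1 / d t x x1 * px1 F t x x1"
proof -
  let ?F = "F t x x1"
  have N: "partially_differentiable3 N t x x1"
    unfolding N_def by (intro partially_differentiable3_diff partially_differentiable3_mult \<alpha> \<gamma>1 F)
  have d: "partially_differentiable3 d t x x1"
    unfolding d_def
    by (intro partially_differentiable3_diff partially_differentiable3_mult \<alpha> \<beta> partially_differentiable3_x1)
  have DtN: "Dt N t x x1 ?F = Dt \<gamma>1 t x x1 ?F - (Dt \<alpha> t x x1 ?F * ?F + \<alpha> t x x1 * Dt F t x x1 ?F)"
    unfolding N_def by (simp add: Dt_diff Dt_mult partially_differentiable3_mult \<alpha> \<gamma>1 F)
  have Dtd: "Dt d t x x1 ?F = Dt \<beta> t x x1 ?F - (Dt \<alpha> t x x1 ?F * x1 + \<alpha> t x x1 * ?F)"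
    unfolding d_def
    by (simp add: Dt_diff Dt_mult Dt_x1 partially_differentiable3_mult partially_differentiable3_x1 \<alpha> \<beta>)
  have "gamma2 \<alpha> \<beta> \<gamma>1 t x x1 ?F
      = Dt N t x x1 ?F + \<alpha> t x x1 * Dt F t x x1 ?F
        + (N t x x1 - Dt d t x x1 ?F) / d t x x1 * N t x x1"
    unfolding gamma2_def DtN Dtd by (simp add: N_def d_def algebra_simps)
  moreover have "\<alpha> t x x1 * pt F t x x1 + \<beta> t x x1 * px F t x x1 + \<gamma>1 t x x1 * px1 F t x x1
      = \<alpha> t x x1 * Dt F t x x1 ?F + d t x x1 * px F t x x1 + N t x x1 * px1 F t x x1"
    by (simp add: Dt_def N_def d_def algebra_simps)
  ultimately have "Dt N t x x1 ?F - N t x x1 / d t x x1 * Dt d t x x1 ?F + N t x x1 / d t x x1 * N t x x1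
      = d t x x1 * px F t x x1 + N t x x1 * px1 F t x x1"
    using invariant by (simp add: algebra_simps diff_divide_distrib)
  then show ?thesis
    using d_nonzero by (simp add: Dt_divide N d field_simps power2_eq_square)
qed

theorem corollary2p6:
  fixes \<alpha> \<beta> \<gamma>1 F :: "real \<Rightarrow> real \<Rightarrow> real \<Rightarrow> real"
  assumes "smooth3 \<alpha>" and "smooth3 \<beta>" and "smooth3 \<gamma>1" and "smooth3 F"
    and "\<And>t x x1. \<beta> t x x1 - \<alpha> t x x1 * x1 \<noteq> 0"
    and "telescopic_invariant \<alpha> \<beta> \<gamma>1 F"
  shows "lambda_symmetry (\<lambda>t x. 0) (\<lambda>t x. 1)
           (\<lambda>t x x1. (\<gamma>1 t x x1 - \<alpha> t x x1 * F t x x1) / (\<beta> t x x1 - \<alpha> t x x1 * x1)) F"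
  unfolding lambda_symmetry_partial_x_iff
proof (intro allI)
  fix t x x1
  show "Dt (\<lambda>t x x1. (\<gamma>1 t x x1 - \<alpha> t x x1 * F t x x1) / (\<beta> t x x1 - \<alpha> t x x1 * x1)) t x x1 (F t x x1)
      + ((\<gamma>1 t x x1 - \<alpha> t x x1 * F t x x1) / (\<beta> t x x1 - \<alpha> t x x1 * x1))\<^sup>2
    = px F t x x1 + (\<gamma>1 t x x1 - \<alpha> t x x1 * F t x x1) / (\<beta> t x x1 - \<alpha> t x x1 * x1) * px1 F t x x1"
    using assms(6)
    by (intro telescopic_invariant_imp_riccati smooth3_partially_differentiable3 assms(1-5))
      (simp add: telescopic_invariant_def)
qed

end
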